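(* Let $p$ be an odd prime and $n,k$ positive integers. Then $$\psi'(P^*(p^n,2^k))=\frac{p+1}{p^{2n+1}+1}+\frac{(p+1)(p^n-1)}{p^{2n+1}+1}\cdot\frac{(p+3)2^{2k-1}+p}{2^{2k+1}+1}.$$
   Context: For a finite group $G$, $\psi(G)=\sum_{x\in G} o(x)$ and $\psi'(G)=\psi(G)/\psi(\mathcal{C}_{|G|})$, where $\mathcal{C}_n$ is the cyclic group of order $n$. For an odd prime $p$ and positive integers $n,k$, $P^*(p^n,2^k)=A\rtimes\langle x\rangle$, where $A$ is elementary abelian of order $p^n$, $\langle x\rangle$ is cyclic of order $2^k$, and $x$ acts on $A$ by inversion $a\mapsto a^{-1}$. *)

theory Defs
  imports "HOL-Computational_Algebra.Primes" "HOL-Algebra.Multiplicative_Group" "HOL-Algebra.Elementary_Groups"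
begin

definition psi :: "('a, 'b) monoid_scheme \<Rightarrow> nat" where
  "psi G = (\<Sum>x\<in>carrier G. group.ord G x)"

definition psi' :: "('a, 'b) monoid_scheme \<Rightarrow> real" where
  "psi' G = real (psi G) / real (psi (integer_mod_group (order G)))"

text \<open>Concrete model of P*(p^n,2^k) = A \<rtimes> <x>: elements are pairs (a, i) with
  a \<in> (Z/p)^n (functions nat => int, coordinates j < n in {0..<p}, zero elsewhere)
  and i \<in> Z/2^k standing for x^i; x acts on A by inversion, so
  (a, x^i)(b, x^j) = (a + (-1)^i b, x^(i+j)).\<close>
definition Pstar :: "nat \<Rightarrow> nat \<Rightarrow> nat \<Rightarrow> ((nat \<Rightarrow> int) \<times> nat) monoid" where
  "Pstar p n k = \<lparr>
     carrier = {(a, i). (\<forall>j. (j < n \<longrightarrow> a j \<in> {0..<int p}) \<and> (j \<ge> n \<longrightarrow> a j = 0))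
                        \<and> i < 2 ^ k},
     monoid.mult = (\<lambda>(a, i) (b, j).
        ((\<lambda>t. if t < n then (a t + (-1) ^ i * b t) mod int p else 0), (i + j) mod 2 ^ k)),
     one = ((\<lambda>_. 0), 0) \<rparr>"

end

(*
  For odd i the element (a, x^i) of P* squares to (0, x^(2i)), so its order is 2^k; for even i it
  is the product of the commuting elements (a, 1) and x^i, so its order is ord(x^i), multiplied by
  p when a is nonzero.  Summing over the 2^k elements above each a gives

    psi(P*(p^n, 2^k)) = p^n 2^(2k-1) + (1 + p (p^n - 1)) psi(C_(2^(k-1))).

  On the cyclic side psi(C_m) = sum over d dvd m of d phi(d), which is multiplicative and equals
  (q^(2e+1) + 1)/(q + 1) at a prime power q^e.  What remains is an identity of rational functions
  in p^n and 2^(2k-1).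
*)
theory Submission
  imports Defs "HOL-Number_Theory.Number_Theory"
begin

section \<open>Sums of element orders of cyclic groups\<close>

lemma dvd_mult_iff_div_gcd_dvd:
  fixes b m i :: nat
  assumes "b > 0"
  shows "b dvd m * i \<longleftrightarrow> b div gcd b i dvd m"
  using assms by (cases "i = 0") (simp_all add: div_dvd_iff_mult gcd_mult_distrib_nat mult.commute)

definition divisor_totient_sum :: "nat \<Rightarrow> nat" where
  "divisor_totient_sum m = (\<Sum>d | d dvd m. d * totient d)"

lemma ord_integer_mod_group:
  assumes "m > 0" and "y < m"
  shows "group.ord (integer_mod_group m) (int y) = m div gcd m y"
proof -
  interpret G: group "integer_mod_group m" by simp
  have y: "int y \<in> carrier (integer_mod_group m)"
    using assms by (simp add: carrier_integer_mod_group)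
  have "int y [^]\<^bsub>integer_mod_group m\<^esub> j = \<one>\<^bsub>integer_mod_group m\<^esub> \<longleftrightarrow> m div gcd m y dvd j"
    for j :: nat
  proof -
    have "int y [^]\<^bsub>integer_mod_group m\<^esub> j = int ((j * y) mod m)"
      by (simp add: zmod_int)
    then show ?thesis
      using dvd_mult_iff_div_gcd_dvd[OF \<open>m > 0\<close>] by auto
  qed
  then show ?thesis
    using G.ord_unique[OF y] by blast
qed

lemma sum_div_gcd_eq_divisor_totient_sum:
  assumes "m > 0"
  shows "(\<Sum>y<m. m div gcd m y) = divisor_totient_sum m"
proof -
  have "(\<Sum>y<m. m div gcd m y) = (\<Sum>y\<in>{0<..m}. m div gcd y m)"
    \<comment> \<open>the summand for \<open>y = 0\<close> reappears as the one for \<open>y = m\<close>\<close>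
  proof -
    have "{..<m} = insert 0 {0<..<m}" "{0<..m} = insert m {0<..<m}"
      using assms by auto
    then show ?thesis by (simp add: gcd.commute)
  qed
  also have "\<dots> = (\<Sum>d | d dvd m. \<Sum>y | y \<in> {0<..m} \<and> gcd y m = d. m div d)"
    by (subst sum.group[symmetric, where g = "\<lambda>y. gcd y m"]) (use assms in auto)
  also have "\<dots> = (\<Sum>d | d dvd m. totient (m div d) * (m div d))"
    using card_gcd_eq_totient[OF assms] by (intro sum.cong) auto
  also have "\<dots> = divisor_totient_sum m"
    unfolding divisor_totient_sum_def using assms
    by (intro sum.reindex_bij_witness[of _ "(div) m" "(div) m"]) auto
  finally show ?thesis .
qed

lemma psi_integer_mod_group:
  assumes "m > 0"
  shows "psi (integer_mod_group m) = divisor_totient_sum m"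
proof -
  have "carrier (integer_mod_group m) = int ` {..<m}"
    using assms by (auto simp: carrier_integer_mod_group image_iff intro!: bexI[where x = "nat _"])
  then show ?thesis
    using assms
    by (simp add: psi_def sum.reindex ord_integer_mod_group sum_div_gcd_eq_divisor_totient_sum)
qed

lemma gcd_mult_eq_left_of_coprime:
  fixes a b x y :: nat
  assumes "coprime a b" "x dvd a" "y dvd b"
  shows "gcd (x * y) a = x"
  using assms by (metis gcd_mult_left_right_cancel gcd_nat.order_iff_strict coprime_divisors gcd_nat.order_iff)

lemma inj_on_mult_coprime_divisors:
  fixes a b :: nat
  assumes "coprime a b"
  shows "inj_on (\<lambda>(x, y). x * y) ({x. x dvd a} \<times> {y. y dvd b})"
proof (rule inj_onI, clarsimp)
  fix x y x' y' assume "x dvd a" "y dvd b" "x' dvd a" "y' dvd b" and eq: "x * y = x' * y'"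
  have "coprime b a"
    using assms by (simp add: coprime_commute)
  have "x = gcd (x * y) a"
    by (rule gcd_mult_eq_left_of_coprime[OF assms \<open>x dvd a\<close> \<open>y dvd b\<close>, symmetric])
  also have "\<dots> = gcd (x' * y') a"
    by (simp only: eq)
  also have "\<dots> = x'"
    by (rule gcd_mult_eq_left_of_coprime[OF assms \<open>x' dvd a\<close> \<open>y' dvd b\<close>])
  finally have "x = x'" .
  have "y = gcd (y * x) b"
    by (rule gcd_mult_eq_left_of_coprime[OF \<open>coprime b a\<close> \<open>y dvd b\<close> \<open>x dvd a\<close>, symmetric])
  also have "\<dots> = gcd (y' * x') b"
    by (simp only: mult.commute[of y] mult.commute[of y'] eq)
  also have "\<dots> = y'"
    by (rule gcd_mult_eq_left_of_coprime[OF \<open>coprime b a\<close> \<open>y' dvd b\<close> \<open>x' dvd a\<close>])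
  finally show "x = x' \<and> y = y'"
    using \<open>x = x'\<close> by simp
qed

lemma divisor_totient_sum_mult:
  assumes "coprime a b"
  shows "divisor_totient_sum (a * b) = divisor_totient_sum a * divisor_totient_sum b"
proof -
  let ?D = "{x. x dvd a} \<times> {y. y dvd b}"
  have divisors: "{d. d dvd a * b} = (\<lambda>(x, y). x * y) ` ?D"
  proof (intro equalityI subsetI)
    fix d assume "d \<in> {d. d dvd a * b}"
    then obtain x y where "d = x * y" "x dvd a" "y dvd b"
      by (auto elim: dvd_productE)
    then show "d \<in> (\<lambda>(x, y). x * y) ` ?D"
      by force
  qed (auto intro: mult_dvd_mono)
  have "divisor_totient_sum (a * b) = (\<Sum>(x, y) \<in> ?D. x * y * totient (x * y))"
    unfolding divisor_totient_sum_def
    by (rule sum.reindex_cong[OF inj_on_mult_coprime_divisors[OF assms] divisors]) auto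
  also have "\<dots> = (\<Sum>(x, y) \<in> ?D. (x * totient x) * (y * totient y))"
  proof (rule sum.cong[OF refl], clarify)
    fix x y assume "x dvd a" "y dvd b"
    then have "coprime x y"
      using assms coprime_divisors by blast
    then show "x * y * totient (x * y) = (x * totient x) * (y * totient y)"
      by (simp add: totient_mult_coprime)
  qed
  also have "\<dots> = divisor_totient_sum a * divisor_totient_sum b"
    by (simp add: divisor_totient_sum_def sum_product sum.cartesian_product)
  finally show ?thesis .
qed

lemma divisor_totient_sum_prime_power:
  assumes "prime q"
  shows "(q + 1) * divisor_totient_sum (q ^ e) = q ^ (2 * e + 1) + 1"
proof -
  have "inj_on (\<lambda>i. q ^ i) {..e}"
    using prime_gt_1_nat[OF assms] by (simp add: inj_on_def)
  moreover have "{d. d dvd q ^ e} = (\<lambda>i. q ^ i) ` {..e}"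
    using divides_primepow_nat[OF assms] by auto
  ultimately have "divisor_totient_sum (q ^ e) = (\<Sum>i\<le>e. q ^ i * totient (q ^ i))"
    by (simp add: divisor_totient_sum_def sum.reindex)
  also have "(q + 1) * \<dots> = q ^ (2 * e + 1) + 1"
  proof (induction e)
    case (Suc e)
    have "(q + 1) * (\<Sum>i\<le>Suc e. q ^ i * totient (q ^ i)) =
        q ^ (2 * e + 1) + 1 + (q + 1) * (q ^ Suc e * (q ^ e * (q - 1)))"
      using Suc.IH by (simp only: sum.atMost_Suc totient_prime_power_Suc[OF assms] distrib_left)
    also have "\<dots> = q ^ (2 * Suc e + 1) + 1"
    proof -
      obtain r where "q = Suc r"
        using assms prime_gt_0_nat not0_implies_Suc by blast
      define P where "P = q ^ e"
      have powers: "q ^ (2 * e + 1) = q * P * P" "q ^ (2 * Suc e + 1) = q * q * q * P * P" "q ^ Suc e = q * P"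
        unfolding P_def by (simp_all add: power_add mult_2)
      show ?thesis
        by (simp only: powers P_def[symmetric]) (simp add: \<open>q = Suc r\<close> algebra_simps)
    qed
    finally show ?case .
  qed simp
  finally show ?thesis .
qed

section \<open>The groups P*(p^n, 2^k)\<close>

definition residue_vectors :: "nat \<Rightarrow> nat \<Rightarrow> (nat \<Rightarrow> int) set" where
  "residue_vectors p n = {a. \<forall>j. (j < n \<longrightarrow> a j \<in> {0..<int p}) \<and> (j \<ge> n \<longrightarrow> a j = 0)}"

lemma card_residue_vectors: "card (residue_vectors p n) = p ^ n"
proof -
  let ?ext = "\<lambda>a j. if j < n then a j else 0"
  let ?B = "PiE {..<n} (\<lambda>_. {0..<int p})"
  have "residue_vectors p n = ?ext ` ?B"
  proof (intro equalityI subsetI)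
    fix a assume a: "a \<in> residue_vectors p n"
    have "a = ?ext (restrict a {..<n})"
      using a by (intro ext) (simp add: residue_vectors_def)
    moreover have "restrict a {..<n} \<in> ?B"
      using a by (simp add: residue_vectors_def)
    ultimately show "a \<in> ?ext ` ?B"
      by (rule image_eqI)
  next
    fix a assume "a \<in> ?ext ` ?B"
    then obtain f where f: "f \<in> ?B" and a: "a = ?ext f" ..
    have "f j \<in> {0..<int p}" if "j < n" for j
      using PiE_mem[OF f] that by simp
    then show "a \<in> residue_vectors p n"
      by (simp add: residue_vectors_def a)
  qed
  moreover have "inj_on ?ext ?B"
  proof (rule inj_onI)
    fix f g assume f: "f \<in> ?B" and g: "g \<in> ?B" and eq: "?ext f = ?ext g"
    show "f = g"
    proof (rule PiE_ext[OF f g])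
      fix j assume "j \<in> {..<n}"
      then show "f j = g j" using fun_cong[OF eq, of j] by simp
    qed
  qed
  ultimately show ?thesis
    by (simp add: card_image card_PiE)
qed

lemma carrier_Pstar: "carrier (Pstar p n k) = residue_vectors p n \<times> {..<2 ^ k}"
  by (auto simp: Pstar_def residue_vectors_def)

lemma mult_Pstar: "(a, i) \<otimes>\<^bsub>Pstar p n k\<^esub> (b, j) =
   ((\<lambda>t. if t < n then (a t + (-1) ^ i * b t) mod int p else 0), (i + j) mod 2 ^ k)"
  by (simp add: Pstar_def)

lemma one_Pstar: "\<one>\<^bsub>Pstar p n k\<^esub> = ((\<lambda>_. 0), 0)"
  by (simp add: Pstar_def)

lemma order_Pstar: "order (Pstar p n k) = p ^ n * 2 ^ k"
  by (simp add: order_def carrier_Pstar card_cartesian_product card_residue_vectors)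

lemma minus_one_power_mod_even:
  assumes "even b"
  shows "(-1::int) ^ (x mod b) = (-1) ^ x"
proof -
  have "even (x mod b) \<longleftrightarrow> even x"
    using assms by (simp add: dvd_mod_iff)
  then show ?thesis
    by (simp add: minus_one_power_iff)
qed

lemma group_Pstar:
  assumes "p > 0" and "k > 0"
  shows "group (Pstar p n k)"
proof (rule groupI)
  fix x y assume "x \<in> carrier (Pstar p n k)" "y \<in> carrier (Pstar p n k)"
  then show "x \<otimes>\<^bsub>Pstar p n k\<^esub> y \<in> carrier (Pstar p n k)"
    using assms by (cases x, cases y) (auto simp: carrier_Pstar mult_Pstar residue_vectors_def)
next
  show "\<one>\<^bsub>Pstar p n k\<^esub> \<in> carrier (Pstar p n k)"
    using assms by (auto simp: carrier_Pstar one_Pstar residue_vectors_def)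
next
  fix x y z :: "(nat \<Rightarrow> int) \<times> nat"
  obtain a i b j c l where xyz: "x = (a, i)" "y = (b, j)" "z = (c, l)"
    by (metis prod.exhaust)
  have sign: "(-1::int) ^ ((i + j) mod 2 ^ k) = (-1) ^ i * (-1) ^ j"
    using assms by (simp add: minus_one_power_mod_even power_add)
  have mod_inner: "(u + s * (v mod int p)) mod int p = (u + s * v) mod int p" for u s v :: int
    by (metis mod_add_right_eq mod_mult_right_eq)
  show "x \<otimes>\<^bsub>Pstar p n k\<^esub> y \<otimes>\<^bsub>Pstar p n k\<^esub> z = x \<otimes>\<^bsub>Pstar p n k\<^esub> (y \<otimes>\<^bsub>Pstar p n k\<^esub> z)"
    unfolding xyz mult_Pstar sign
    by (auto simp: fun_eq_iff mod_inner mod_add_left_eq mod_add_right_eq algebra_simps)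
next
  fix x assume "x \<in> carrier (Pstar p n k)"
  then show "\<one>\<^bsub>Pstar p n k\<^esub> \<otimes>\<^bsub>Pstar p n k\<^esub> x = x"
    by (cases x) (auto simp: carrier_Pstar mult_Pstar one_Pstar residue_vectors_def fun_eq_iff)
next
  fix x assume "x \<in> carrier (Pstar p n k)"
  then obtain a i where x: "x = (a, i)" and "i < 2 ^ k"
    by (auto simp: carrier_Pstar)
  define y where "y = ((\<lambda>t. if t < n then - ((-1) ^ i * a t) mod int p else 0), (2 ^ k - i) mod 2 ^ k)"
  have "y \<in> carrier (Pstar p n k)"
    using assms by (auto simp: y_def carrier_Pstar residue_vectors_def)
  moreover have "y \<otimes>\<^bsub>Pstar p n k\<^esub> x = \<one>\<^bsub>Pstar p n k\<^esub>"
  proof -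
    have "(-1::int) ^ ((2 ^ k - i) mod 2 ^ k) = (-1) ^ (2 ^ k - i)"
      using assms by (simp add: minus_one_power_mod_even)
    also have "\<dots> = (-1) ^ i"
      using assms \<open>i < 2 ^ k\<close> by (simp add: minus_one_power_iff)
    finally have sign: "(-1::int) ^ ((2 ^ k - i) mod 2 ^ k) = (-1) ^ i" .
    moreover have "((2 ^ k - i) mod 2 ^ k + i) mod 2 ^ k = (0::nat)"
      using \<open>i < 2 ^ k\<close> by (simp add: mod_add_left_eq)
    ultimately show ?thesis
      by (simp add: y_def x mult_Pstar one_Pstar fun_eq_iff mod_add_left_eq)
  qed
  ultimately show "\<exists>y\<in>carrier (Pstar p n k). y \<otimes>\<^bsub>Pstar p n k\<^esub> x = \<one>\<^bsub>Pstar p n k\<^esub>"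
    by blast
qed

lemma sum_minus_one_power_mult:
  "(\<Sum>j<m. (-1::int) ^ (j * i)) = int (if even i then m else m mod 2)"
  by (induction m) (auto simp: minus_one_power_iff mod_Suc)

lemma pow_Pstar:
  assumes "k > 0"
  shows "(a, i) [^]\<^bsub>Pstar p n k\<^esub> m =
    ((\<lambda>t. if t < n then (int (if even i then m else m mod 2) * a t) mod int p else 0), (m * i) mod 2 ^ k)"
proof -
  have "(a, i) [^]\<^bsub>Pstar p n k\<^esub> m =
    ((\<lambda>t. if t < n then ((\<Sum>j<m. (-1) ^ (j * i)) * a t) mod int p else 0), (m * i) mod 2 ^ k)"
  proof (induction m)
    case (Suc m)
    have "(-1::int) ^ ((m * i) mod 2 ^ k) = (-1) ^ (m * i)"
      using assms by (simp add: minus_one_power_mod_even)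
    moreover have "(m * i mod 2 ^ k + i) mod 2 ^ k = (Suc m * i) mod 2 ^ k"
      by (metis add.commute mod_add_left_eq mult_Suc)
    ultimately show ?case
      by (simp add: Suc.IH mult_Pstar fun_eq_iff mod_add_left_eq mod_add_right_eq algebra_simps)
  qed (simp add: one_Pstar fun_eq_iff)
  then show ?thesis
    by (simp only: sum_minus_one_power_mult)
qed

lemma pow_eq_one_Pstar_iff:
  assumes "k > 0"
  shows "(a, i) [^]\<^bsub>Pstar p n k\<^esub> m = \<one>\<^bsub>Pstar p n k\<^esub> \<longleftrightarrow>
    (\<forall>t<n. (int (if even i then m else m mod 2) * a t) mod int p = 0) \<and> 2 ^ k dvd m * i"
  by (auto simp: pow_Pstar[OF assms] one_Pstar fun_eq_iff split: if_splits)

lemma residue_vector_scale_eq_zero_iff: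
  assumes "prime p" and "a \<in> residue_vectors p n"
  shows "(\<forall>t<n. (int m * a t) mod int p = 0) \<longleftrightarrow> a = (\<lambda>_. 0) \<or> p dvd m"
proof
  assume zero: "\<forall>t<n. (int m * a t) mod int p = 0"
  show "a = (\<lambda>_. 0) \<or> p dvd m"
  proof (cases "a = (\<lambda>_. 0)")
    case False
    then obtain t where "a t \<noteq> 0"
      by auto
    with assms(2) have "t < n" and "0 < a t" and "a t < int p"
      by (auto simp: residue_vectors_def not_less)
    then have "\<not> int p dvd a t"
      using zdvd_imp_le by fastforce
    moreover have "int p dvd int m * a t"
      using zero \<open>t < n\<close> by (simp add: mod_eq_0_iff_dvd)
    ultimately have "p dvd m"
      using assms(1) by (simp add: prime_dvd_mult_iff)
    then show ?thesis ..
  qed simp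
qed auto

lemma ord_Pstar_odd:
  assumes "p > 0" and "k > 0" and "(a, i) \<in> carrier (Pstar p n k)" and "odd i"
  shows "group.ord (Pstar p n k) (a, i) = 2 ^ k"
proof -
  interpret group "Pstar p n k"
    using assms by (simp add: group_Pstar)
  have "(a, i) [^]\<^bsub>Pstar p n k\<^esub> m = \<one>\<^bsub>Pstar p n k\<^esub> \<longleftrightarrow> 2 ^ k dvd m" for m :: nat
  proof -
    have "2 ^ k dvd m * i \<longleftrightarrow> 2 ^ k dvd m"
      using \<open>odd i\<close> by (simp add: coprime_dvd_mult_left_iff)
    moreover have "even m" if "2 ^ k dvd m"
      using \<open>k > 0\<close> that dvd_trans[of 2 "2 ^ k" m] by simp
    ultimately show ?thesis
      using \<open>odd i\<close> by (auto simp: pow_eq_one_Pstar_iff[OF \<open>k > 0\<close>])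
  qed
  then show ?thesis
    using ord_unique[OF assms(3)] by blast
qed

lemma ord_Pstar_even:
  assumes "prime p" and "odd p" and "k > 0" and "(a, i) \<in> carrier (Pstar p n k)" and "even i"
  shows "group.ord (Pstar p n k) (a, i) =
    (if a = (\<lambda>_. 0) then 1 else p) * (2 ^ k div gcd (2 ^ k) i)"
proof -
  interpret group "Pstar p n k"
    using assms by (simp add: group_Pstar prime_gt_0_nat)
  define d where "d = 2 ^ k div gcd (2 ^ k) i"
  have "coprime p d"
  proof -
    have "d dvd 2 ^ k"
      unfolding d_def by (metis dvd_div_mult_self dvd_triv_left gcd_dvd1)
    moreover have "coprime p (2 ^ k)"
      using \<open>odd p\<close> by simp
    ultimately show ?thesis
      using coprime_divisors dvd_refl by blast
  qed
  have "(a, i) [^]\<^bsub>Pstar p n k\<^esub> m = \<one>\<^bsub>Pstar p n k\<^esub> \<longleftrightarrow>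
      (if a = (\<lambda>_. 0) then 1 else p) * d dvd m" for m :: nat
  proof -
    have "(a, i) [^]\<^bsub>Pstar p n k\<^esub> m = \<one>\<^bsub>Pstar p n k\<^esub> \<longleftrightarrow>
        (a = (\<lambda>_. 0) \<or> p dvd m) \<and> d dvd m"
      using assms \<open>even i\<close>
      by (simp add: pow_eq_one_Pstar_iff residue_vector_scale_eq_zero_iff carrier_Pstar
          dvd_mult_iff_div_gcd_dvd d_def)
    also have "\<dots> \<longleftrightarrow> (if a = (\<lambda>_. 0) then 1 else p) * d dvd m"
      using divides_mult[of p m d] \<open>coprime p d\<close> dvd_mult_left[of p d m] dvd_mult_right[of p d m]
      by auto
    finally show ?thesis .
  qed
  then show ?thesis
    unfolding d_def using ord_unique[OF assms(4)] by blast
qed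

lemma sum_lessThan_even_odd:
  fixes f :: "nat \<Rightarrow> 'a::comm_monoid_add"
  shows "(\<Sum>i<2 * M. f i) = (\<Sum>j<M. f (2 * j) + f (2 * j + 1))"
  by (induction M) (simp_all add: algebra_simps)

lemma sum_ord_Pstar_fibre:
  assumes "prime p" and "odd p" and "k > 0" and "a \<in> residue_vectors p n"
  shows "(\<Sum>i<2 ^ k. group.ord (Pstar p n k) (a, i)) =
    2 ^ (2 * k - 1) + (if a = (\<lambda>_. 0) then 1 else p) * divisor_totient_sum (2 ^ (k - 1))"
proof -
  define M where "M = (2::nat) ^ (k - 1)"
  define c where "c = (if a = (\<lambda>_. 0) then 1 else p)"
  have "M > 0"
    by (simp add: M_def)
  have "k = Suc (k - 1)" and exp: "2 * k - 1 = (k - 1) + k"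
    using \<open>k > 0\<close> by simp_all
  then have M: "(2::nat) ^ k = 2 * M" "(2::nat) ^ (2 * k - 1) = M * 2 ^ k"
    unfolding M_def by (metis power_Suc) (simp only: exp power_add)
  have "(\<Sum>i<2 ^ k. group.ord (Pstar p n k) (a, i)) =
      (\<Sum>j<M. group.ord (Pstar p n k) (a, 2 * j) + group.ord (Pstar p n k) (a, 2 * j + 1))"
    unfolding M by (rule sum_lessThan_even_odd)
  also have "\<dots> = (\<Sum>j<M. c * (M div gcd M j) + 2 * M)"
  proof (rule sum.cong[OF refl])
    fix j assume "j \<in> {..<M}"
    then have "(a, 2 * j) \<in> carrier (Pstar p n k)" "(a, 2 * j + 1) \<in> carrier (Pstar p n k)"
      using assms(4) by (auto simp: carrier_Pstar M)
    moreover have "gcd (2 * M) (2 * j) = 2 * gcd M j"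
      by (simp add: gcd_mult_distrib_nat)
    ultimately show "group.ord (Pstar p n k) (a, 2 * j) + group.ord (Pstar p n k) (a, 2 * j + 1) =
        c * (M div gcd M j) + 2 * M"
      using assms by (simp add: ord_Pstar_even ord_Pstar_odd prime_gt_0_nat c_def M)
  qed
  also have "\<dots> = M * 2 ^ k + c * divisor_totient_sum M"
    using sum_div_gcd_eq_divisor_totient_sum[of M] \<open>M > 0\<close>
    by (simp add: sum.distrib M(1) flip: sum_distrib_left)
  also have "\<dots> = 2 ^ (2 * k - 1) + c * divisor_totient_sum M"
    by (simp only: M(2))
  finally show ?thesis
    by (simp add: c_def M_def)
qed

text \<open>Scaled by 3 to stay in \<open>nat\<close>, since 3 psi(C_(2^(k-1))) = 2^(2k-1) + 1.\<close>

lemma psi_Pstar: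
  assumes "prime p" and "odd p" and "k > 0"
  shows "3 * psi (Pstar p n k) =
    3 * p ^ n * 2 ^ (2 * k - 1) + (1 + p * (p ^ n - 1)) * (2 ^ (2 * k - 1) + 1)"
proof -
  let ?A = "residue_vectors p n"
  let ?D = "divisor_totient_sum (2 ^ (k - 1))"
  have "finite ?A" and "(\<lambda>_. 0) \<in> ?A"
    using card_residue_vectors[of p n] prime_gt_0_nat[OF \<open>prime p\<close>]
    by (auto simp: residue_vectors_def intro: card_ge_0_finite)
  have "psi (Pstar p n k) = (\<Sum>a\<in>?A. \<Sum>i<2 ^ k. group.ord (Pstar p n k) (a, i))"
    by (simp add: psi_def carrier_Pstar sum.cartesian_product)
  also have "\<dots> = (\<Sum>a\<in>?A. 2 ^ (2 * k - 1) + (if a = (\<lambda>_. 0) then 1 else p) * ?D)"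
    using assms by (simp add: sum_ord_Pstar_fibre)
  also have "\<dots> = card ?A * 2 ^ (2 * k - 1) + (1 + p * (card ?A - 1)) * ?D"
    using \<open>finite ?A\<close> \<open>(\<lambda>_. 0) \<in> ?A\<close>
    by (simp add: sum.distrib sum_distrib_right sum.remove[of ?A "\<lambda>_. 0"] card_Diff_singleton)
  finally have "psi (Pstar p n k) = p ^ n * 2 ^ (2 * k - 1) + (1 + p * (p ^ n - 1)) * ?D"
    by (simp add: card_residue_vectors)
  moreover have "2 ^ (2 * k - 1) + 1 = 3 * ?D"
    using divisor_totient_sum_prime_power[of 2 "k - 1"] \<open>k > 0\<close> by (simp add: mult_2 Suc_diff_Suc)
  ultimately show ?thesis
    by (simp only: distrib_left mult_ac)
qed

lemma psi_integer_mod_group_order_Pstar: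
  assumes "prime p" and "odd p"
  shows "3 * (p + 1) * psi (integer_mod_group (order (Pstar p n k))) =
    (p ^ (2 * n + 1) + 1) * (2 ^ (2 * k + 1) + 1)"
proof -
  have "psi (integer_mod_group (order (Pstar p n k))) =
      divisor_totient_sum (p ^ n) * divisor_totient_sum (2 ^ k)"
    using \<open>odd p\<close> prime_gt_0_nat[OF \<open>prime p\<close>]
    by (simp add: order_Pstar psi_integer_mod_group divisor_totient_sum_mult)
  then have "3 * (p + 1) * psi (integer_mod_group (order (Pstar p n k))) =
      ((p + 1) * divisor_totient_sum (p ^ n)) * ((2 + 1) * divisor_totient_sum (2 ^ k))"
    by (simp add: algebra_simps)
  also have "\<dots> = (p ^ (2 * n + 1) + 1) * (2 ^ (2 * k + 1) + 1)"
    by (simp only: divisor_totient_sum_prime_power \<open>prime p\<close> two_is_prime_nat)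
  finally show ?thesis .
qed

text \<open>Here \<open>X\<close> stands for \<open>p^n\<close> and \<open>v\<close> for \<open>2^(2k-1)\<close>.\<close>

lemma ratio_of_closed_forms:
  fixes A B p X v :: real
  assumes "p \<ge> 0" and "v \<ge> 0"
    and A: "3 * A = 3 * X * v + (1 + p * (X - 1)) * (v + 1)"
    and B: "3 * (p + 1) * B = (p * X\<^sup>2 + 1) * (4 * v + 1)"
  shows "A / B = (p + 1) / (p * X\<^sup>2 + 1)
    + (p + 1) * (X - 1) / (p * X\<^sup>2 + 1) * (((p + 3) * v + p) / (4 * v + 1))"
proof -
  define D C where "D = p * X\<^sup>2 + 1" and "C = 4 * v + 1"
  have "D > 0" "C > 0"
    unfolding D_def C_def using assms by (intro add_nonneg_pos mult_nonneg_nonneg; simp)+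
  have A_eq: "A = (3 * X * v + (1 + p * (X - 1)) * (v + 1)) / 3" and B_eq: "B = D * C / (3 * (p + 1))"
    using A B \<open>p \<ge> 0\<close> by (simp_all add: D_def C_def field_simps)
  show ?thesis
    using \<open>D > 0\<close> \<open>C > 0\<close> \<open>p \<ge> 0\<close>
    unfolding A_eq B_eq D_def[symmetric] C_def[symmetric]
    by (simp add: field_simps) (simp add: C_def algebra_simps)
qed

theorem proposition3p9:
  fixes p n k :: nat
  assumes "prime p" and "odd p" and "n > 0" and "k > 0"
  shows "psi' (Pstar p n k) =
     (real p + 1) / (real p ^ (2 * n + 1) + 1)
     + ((real p + 1) * (real p ^ n - 1)) / (real p ^ (2 * n + 1) + 1)
       * (((real p + 3) * 2 ^ (2 * k - 1) + real p) / (2 ^ (2 * k + 1) + 1))"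
proof -
  have "1 \<le> p ^ n"
    using prime_gt_0_nat[OF \<open>prime p\<close>] by simp
  have powers: "real p ^ (2 * n + 1) = real p * (real p ^ n)\<^sup>2"
    "(2::real) ^ (2 * k + 1) = 4 * 2 ^ (2 * k - 1)"
    by (simp add: power_even_eq) (use \<open>k > 0\<close> in \<open>cases k; simp\<close>)
  show ?thesis
    unfolding psi'_def powers
  proof (rule ratio_of_closed_forms)
    show "3 * real (psi (Pstar p n k)) = 3 * real p ^ n * 2 ^ (2 * k - 1)
        + (1 + real p * (real p ^ n - 1)) * (2 ^ (2 * k - 1) + 1)"
      using arg_cong[OF psi_Pstar[OF \<open>prime p\<close> \<open>odd p\<close> \<open>k > 0\<close>, of n], of real] \<open>1 \<le> p ^ n\<close>
      by (simp add: of_nat_diff) (simp add: algebra_simps)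
    show "3 * (real p + 1) * real (psi (integer_mod_group (order (Pstar p n k)))) =
        (real p * (real p ^ n)\<^sup>2 + 1) * (4 * 2 ^ (2 * k - 1) + 1)"
      unfolding powers[symmetric]
      using arg_cong[OF psi_integer_mod_group_order_Pstar[OF \<open>prime p\<close> \<open>odd p\<close>, of n k], of real]
      by (simp add: algebra_simps)
  qed simp_all
qed

end
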